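(* Let $(X,\to)$ be a transition system over an alphabet $A$ and let $R_0\subseteq X\times X$ be a preorder. Consider the map $\beta_{R_0}\colon \mathit{Eq}(\mathcal P(X))\to\mathit{Eq}(\mathcal P(X))$, $\beta_{R_0}(R)=\beta_t(R)\cap (R_0)_H$. Then the least fixpoint $\mu\,\beta_{R_0}$ of $\beta_{R_0}$ in the complete lattice $(\mathit{Eq}(\mathcal P(X)),\supseteq)$ equals the set $\Omega(R_0)$ of all pairs $(X_1,X_2)$ of subsets of $X$ such that: whenever $x_1\in X_1$ and $x_1\xrightarrow{\sigma}x_1'$ for some $\sigma\in A^*$, there is $x_2\in X_2$ with $x_2\xrightarrow{\sigma}x_2'$ and $x_1'\mathrel{R_0}x_2'$; and, symmetrically, whenever $x_2\in X_2$ and $x_2\xrightarrow{\sigma}x_2'$, there is $x_1\in X_1$ with $x_1\xrightarrow{\sigma}x_1'$ and $x_2'\mathrel{R_0}x_1'$.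
   Context: A transition system over $A$ is a pair $(X,\to)$ with $\to\subseteq X\times A\times X$; write $x\xrightarrow{a}x'$ for $(x,a,x')\in\to$, $\delta_a(x)=\{x'\mid x\xrightarrow{a}x'\}$, and for $Y\subseteq X$, $\delta_a[Y]=\bigcup_{y\in Y}\delta_a(y)$. For $\sigma=a_1\cdots a_n\in A^*$, $x\xrightarrow{\sigma}x'$ means $x\xrightarrow{a_1}\cdots\xrightarrow{a_n}x'$ (for the empty word, $x'=x$). $\mathit{Eq}(\mathcal P(X))$ is the set of equivalence relations on $\mathcal P(X)$. For $R\subseteq X\times X$, define $R_{\overrightarrow H}\subseteq\mathcal P(X)\times\mathcal P(X)$ by $X_1\mathrel{R_{\overrightarrow H}}X_2$ iff $\forall x_1\in X_1\,\exists x_2\in X_2\colon x_1\mathrel R x_2$, and $R_H=R_{\overrightarrow H}\cap(R_{\overrightarrow H})^{-1}$. For $S\subseteq X$ and $a\in A$, $\Diamond_a(S)=\{x\mid\exists x'\in S\colon x\xrightarrow{a}x'\}$. Define $\alpha_t\colon\mathcal P(\mathcal P(X))\to\mathit{Eq}(\mathcal P(X))$, $\alpha_t(\mathcal S)=\{(X_1,X_2)\mid\forall S\in\mathcal S\colon(X_1\cap S\neq\emptyset\iff X_2\cap S\neq\emptyset)\}$; $\gamma_t\colon\mathit{Eq}(\mathcal P(X))\to\mathcal P(\mathcal P(X))$, $\gamma_t(R)=\{S\subseteq X\mid\forall(X_1,X_2)\in R\colon(X_1\cap S\neq\emptyset\iff X_2\cap S\neq\emptyset)\}$; $\mathit{lo}_t(\mathcal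 S)=\bigcup_{a\in A}\{\Diamond_a(S)\mid S\in\mathcal S\}\cup\{X\}$; and $\beta_t=\alpha_t\circ\mathit{lo}_t\circ\gamma_t$. *)

theory Defs
  imports Main
begin

definition is_lts :: "'x set \<Rightarrow> 'a set \<Rightarrow> ('x \<times> 'a \<times> 'x) set \<Rightarrow> bool" where
  "is_lts X A T \<longleftrightarrow> T \<subseteq> X \<times> A \<times> X"

fun steps :: "('x \<times> 'a \<times> 'x) set \<Rightarrow> 'x \<Rightarrow> 'a list \<Rightarrow> 'x \<Rightarrow> bool" where
  "steps T x [] x' \<longleftrightarrow> x' = x"
| "steps T x (a # \<sigma>) x' \<longleftrightarrow> (\<exists>y. (x, a, y) \<in> T \<and> steps T y \<sigma> x')"

definition Eq_Pow :: "'x set \<Rightarrow> ('x set \<times> 'x set) set set" where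
  "Eq_Pow X = {R. equiv (Pow X) R}"

definition is_preorder :: "'x set \<Rightarrow> ('x \<times> 'x) set \<Rightarrow> bool" where
  "is_preorder X R0 \<longleftrightarrow> R0 \<subseteq> X \<times> X \<and> (\<forall>x\<in>X. (x, x) \<in> R0) \<and> trans R0"

definition RH_fwd :: "'x set \<Rightarrow> ('x \<times> 'x) set \<Rightarrow> ('x set \<times> 'x set) set" where
  "RH_fwd X R = {(X1, X2). X1 \<subseteq> X \<and> X2 \<subseteq> X \<and> (\<forall>x1\<in>X1. \<exists>x2\<in>X2. (x1, x2) \<in> R)}"

definition RH :: "'x set \<Rightarrow> ('x \<times> 'x) set \<Rightarrow> ('x set \<times> 'x set) set" where
  "RH X R = RH_fwd X R \<inter> (RH_fwd X R)\<inverse>"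

definition Diam :: "('x \<times> 'a \<times> 'x) set \<Rightarrow> 'a \<Rightarrow> 'x set \<Rightarrow> 'x set" where
  "Diam T a S = {x. \<exists>x'\<in>S. (x, a, x') \<in> T}"

definition alpha_t :: "'x set \<Rightarrow> 'x set set \<Rightarrow> ('x set \<times> 'x set) set" where
  "alpha_t X \<S> = {(X1, X2). X1 \<subseteq> X \<and> X2 \<subseteq> X \<and>
      (\<forall>S\<in>\<S>. (X1 \<inter> S \<noteq> {} \<longleftrightarrow> X2 \<inter> S \<noteq> {}))}"

definition gamma_t :: "'x set \<Rightarrow> ('x set \<times> 'x set) set \<Rightarrow> 'x set set" where
  "gamma_t X R = {S. S \<subseteq> X \<and>
      (\<forall>(X1, X2)\<in>R. (X1 \<inter> S \<noteq> {} \<longleftrightarrow> X2 \<inter> S \<noteq> {}))}"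

definition lo_t :: "'x set \<Rightarrow> 'a set \<Rightarrow> ('x \<times> 'a \<times> 'x) set \<Rightarrow> 'x set set \<Rightarrow> 'x set set" where
  "lo_t X A T \<S> = (\<Union>a\<in>A. Diam T a ` \<S>) \<union> {X}"

definition beta_t :: "'x set \<Rightarrow> 'a set \<Rightarrow> ('x \<times> 'a \<times> 'x) set
    \<Rightarrow> ('x set \<times> 'x set) set \<Rightarrow> ('x set \<times> 'x set) set" where
  "beta_t X A T R = alpha_t X (lo_t X A T (gamma_t X R))"

definition beta_R0 :: "'x set \<Rightarrow> 'a set \<Rightarrow> ('x \<times> 'a \<times> 'x) set \<Rightarrow> ('x \<times> 'x) set
    \<Rightarrow> ('x set \<times> 'x set) set \<Rightarrow> ('x set \<times> 'x set) set" where
  "beta_R0 X A T R0 R = beta_t X A T R \<inter> RH X R0"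

definition Omega :: "'x set \<Rightarrow> 'a set \<Rightarrow> ('x \<times> 'a \<times> 'x) set \<Rightarrow> ('x \<times> 'x) set
    \<Rightarrow> ('x set \<times> 'x set) set" where
  "Omega X A T R0 = {(X1, X2). X1 \<subseteq> X \<and> X2 \<subseteq> X \<and>
     (\<forall>x1\<in>X1. \<forall>\<sigma>\<in>lists A. \<forall>x1'. steps T x1 \<sigma> x1' \<longrightarrow>
        (\<exists>x2\<in>X2. \<exists>x2'. steps T x2 \<sigma> x2' \<and> (x1', x2') \<in> R0)) \<and>
     (\<forall>x2\<in>X2. \<forall>\<sigma>\<in>lists A. \<forall>x2'. steps T x2 \<sigma> x2' \<longrightarrow>
        (\<exists>x1\<in>X1. \<exists>x1'. steps T x1 \<sigma> x1' \<and> (x2', x1') \<in> R0))}"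

text \<open>Least fixpoint of f in the complete lattice (Eq(P(X)), \<supseteq>):
  a fixpoint in Eq(P(X)) containing every other fixpoint in Eq(P(X)).\<close>
definition is_lfp_sup :: "'x set \<Rightarrow> (('x set \<times> 'x set) set \<Rightarrow> ('x set \<times> 'x set) set)
    \<Rightarrow> ('x set \<times> 'x set) set \<Rightarrow> bool" where
  "is_lfp_sup X f M \<longleftrightarrow> M \<in> Eq_Pow X \<and> f M = M \<and>
     (\<forall>R\<in>Eq_Pow X. f R = R \<longrightarrow> R \<subseteq> M)"

end

theory Submission
  imports Defs
begin

text \<open>\<Omega>(R0) is an equivalence relation and a post-fixpoint of \<beta>_R0: it lies in (R0)_H by
  the empty word, and it respects every test set \<Diamond>_a S with S \<in> \<gamma>_t(\<Omega>) because \<Omega> is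
  stable under passing to a-successor sets \<delta>_a[-]. By monotonicity \<beta>_R0(\<Omega>) is a
  post-fixpoint as well.

  Conversely, every post-fixpoint R that is an equivalence closed under unions of related pairs
  (as every \<beta>_R0(Q) is) lies in \<Omega>, by induction on the word. Given X1 R X2 and
  x1 \<rightarrow>_a y, let C be the union of the R-class of \<delta>_a[X2]. Union closure gives C R \<delta>_a[X2],
  and it makes X - C a test set in \<gamma>_t(R). As X1 and X2 agree on \<Diamond>_a(X - C) and
  \<delta>_a[X2] \<subseteq> C, y must lie in C, and the induction hypothesis applies to C R \<delta>_a[X2].\<close>

definition Union_closed :: "('x set \<times> 'x set) set \<Rightarrow> bool" where
  "Union_closed R \<longleftrightarrow> (\<forall>P\<subseteq>R. (\<Union>(fst ` P), \<Union>(snd ` P)) \<in> R)"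

lemma Union_closedD: "Union_closed R \<Longrightarrow> P \<subseteq> R \<Longrightarrow> (\<Union>(fst ` P), \<Union>(snd ` P)) \<in> R"
  by (simp add: Union_closed_def)

lemma Union_closed_Int: "Union_closed R \<Longrightarrow> Union_closed S \<Longrightarrow> Union_closed (R \<inter> S)"
  by (simp add: Union_closed_def)

lemma Union_closed_Un2:
  assumes "Union_closed R" "(Y1, Y2) \<in> R" "(Z1, Z2) \<in> R"
  shows "(Y1 \<union> Z1, Y2 \<union> Z2) \<in> R"
  using Union_closedD[OF assms(1), of "{(Y1, Y2), (Z1, Z2)}"] assms(2,3) by simp

lemma mem_alpha_t:
  "(X1, X2) \<in> alpha_t X \<S> \<longleftrightarrow>
     X1 \<subseteq> X \<and> X2 \<subseteq> X \<and> (\<forall>S\<in>\<S>. X1 \<inter> S \<noteq> {} \<longleftrightarrow> X2 \<inter> S \<noteq> {})"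
  by (simp add: alpha_t_def)

lemma mem_RH:
  "(X1, X2) \<in> RH X R \<longleftrightarrow> X1 \<subseteq> X \<and> X2 \<subseteq> X \<and>
     (\<forall>x1\<in>X1. \<exists>x2\<in>X2. (x1, x2) \<in> R) \<and> (\<forall>x2\<in>X2. \<exists>x1\<in>X1. (x2, x1) \<in> R)"
  by (auto simp: RH_def RH_fwd_def)

lemma Union_closed_alpha_t: "Union_closed (alpha_t X \<S>)"
  unfolding Union_closed_def
proof (intro allI impI)
  fix P assume P: "P \<subseteq> alpha_t X \<S>"
  have mem: "fst p \<subseteq> X \<and> snd p \<subseteq> X \<and> (\<forall>S\<in>\<S>. fst p \<inter> S \<noteq> {} \<longleftrightarrow> snd p \<inter> S \<noteq> {})"
    if "p \<in> P" for p
    using subsetD[OF P that] mem_alpha_t[of "fst p" "snd p"] by simp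
  have "\<Union>(fst ` P) \<inter> S \<noteq> {} \<longleftrightarrow> \<Union>(snd ` P) \<inter> S \<noteq> {}" if "S \<in> \<S>" for S
  proof -
    have "(\<exists>p\<in>P. fst p \<inter> S \<noteq> {}) \<longleftrightarrow> (\<exists>p\<in>P. snd p \<inter> S \<noteq> {})"
      using mem that by blast
    moreover have "\<Union>(f ` P) \<inter> S \<noteq> {} \<longleftrightarrow> (\<exists>p\<in>P. f p \<inter> S \<noteq> {})" for f :: "_ \<Rightarrow> 'a set"
      by blast
    ultimately show ?thesis by blast
  qed
  moreover have "\<Union>(fst ` P) \<subseteq> X" "\<Union>(snd ` P) \<subseteq> X"
    using mem by blast+
  ultimately show "(\<Union>(fst ` P), \<Union>(snd ` P)) \<in> alpha_t X \<S>"
    by (simp add: mem_alpha_t)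
qed

lemma Union_closed_RH: "Union_closed (RH X R)"
  unfolding Union_closed_def
proof (intro allI impI)
  fix P assume P: "P \<subseteq> RH X R"
  have mem: "fst p \<subseteq> X \<and> snd p \<subseteq> X \<and>
      (\<forall>x1\<in>fst p. \<exists>x2\<in>snd p. (x1, x2) \<in> R) \<and> (\<forall>x2\<in>snd p. \<exists>x1\<in>fst p. (x2, x1) \<in> R)"
    if "p \<in> P" for p
    using subsetD[OF P that] mem_RH[of "fst p" "snd p"] by simp
  have "\<exists>x2\<in>\<Union>(snd ` P). (x1, x2) \<in> R" if "x1 \<in> \<Union>(fst ` P)" for x1
  proof -
    from that obtain p where "p \<in> P" "x1 \<in> fst p" by blast
    with mem obtain x2 where "x2 \<in> snd p" "(x1, x2) \<in> R" by blast
    with \<open>p \<in> P\<close> show ?thesis by blast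
  qed
  moreover have "\<exists>x1\<in>\<Union>(fst ` P). (x2, x1) \<in> R" if "x2 \<in> \<Union>(snd ` P)" for x2
  proof -
    from that obtain p where "p \<in> P" "x2 \<in> snd p" by blast
    with mem obtain x1 where "x1 \<in> fst p" "(x2, x1) \<in> R" by blast
    with \<open>p \<in> P\<close> show ?thesis by blast
  qed
  moreover have "\<Union>(fst ` P) \<subseteq> X" "\<Union>(snd ` P) \<subseteq> X"
    using mem by blast+
  ultimately show "(\<Union>(fst ` P), \<Union>(snd ` P)) \<in> RH X R"
    by (simp add: mem_RH)
qed

lemma equiv_Int: "equiv A R \<Longrightarrow> equiv A S \<Longrightarrow> equiv A (R \<inter> S)"
  unfolding equiv_def refl_on_def sym_def trans_def by blast

lemma equiv_alpha_t: "equiv (Pow X) (alpha_t X \<S>)"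
  unfolding equiv_def refl_on_def sym_def trans_def alpha_t_def by auto

lemma equiv_RH:
  assumes "is_preorder X R"
  shows "equiv (Pow X) (RH X R)"
proof (rule equivI)
  have "trans R" using assms by (simp add: is_preorder_def)
  show "trans (RH X R)"
  proof (rule transI)
    fix Y1 Y2 Y3 assume "(Y1, Y2) \<in> RH X R" "(Y2, Y3) \<in> RH X R"
    with \<open>trans R\<close> show "(Y1, Y3) \<in> RH X R"
      unfolding mem_RH by (meson transD)
  qed
  show "RH X R \<subseteq> Pow X \<times> Pow X" by (auto simp: RH_def RH_fwd_def)
  show "refl_on (Pow X) (RH X R)"
    using assms by (auto simp: refl_on_def mem_RH is_preorder_def)
  show "sym (RH X R)" by (auto simp: sym_def RH_def)
qed

lemma equiv_beta_R0: "is_preorder X R0 \<Longrightarrow> equiv (Pow X) (beta_R0 X A T R0 R)"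
  unfolding beta_R0_def beta_t_def by (intro equiv_Int equiv_alpha_t equiv_RH)

lemma Union_closed_beta_R0: "Union_closed (beta_R0 X A T R0 R)"
  unfolding beta_R0_def beta_t_def by (intro Union_closed_Int Union_closed_alpha_t Union_closed_RH)

lemma gamma_tD: "S \<in> gamma_t X R \<Longrightarrow> (X1, X2) \<in> R \<Longrightarrow> X1 \<inter> S \<noteq> {} \<longleftrightarrow> X2 \<inter> S \<noteq> {}"
  unfolding gamma_t_def by blast

lemma gamma_t_antimono: "R \<subseteq> R' \<Longrightarrow> gamma_t X R' \<subseteq> gamma_t X R"
  unfolding gamma_t_def by (auto 0 3 dest: bspec)

lemma lo_t_mono: "\<S> \<subseteq> \<S>' \<Longrightarrow> lo_t X A T \<S> \<subseteq> lo_t X A T \<S>'"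
  unfolding lo_t_def by blast

lemma alpha_t_antimono: "\<S> \<subseteq> \<S>' \<Longrightarrow> alpha_t X \<S>' \<subseteq> alpha_t X \<S>"
  unfolding alpha_t_def by auto

lemma beta_R0_mono: "R \<subseteq> R' \<Longrightarrow> beta_R0 X A T R0 R \<subseteq> beta_R0 X A T R0 R'"
  unfolding beta_R0_def beta_t_def
proof (rule Int_mono)
  assume "R \<subseteq> R'"
  then show "alpha_t X (lo_t X A T (gamma_t X R)) \<subseteq> alpha_t X (lo_t X A T (gamma_t X R'))"
    by (intro alpha_t_antimono lo_t_mono gamma_t_antimono)
qed (rule order_refl)

definition succs :: "('x \<times> 'a \<times> 'x) set \<Rightarrow> 'a \<Rightarrow> 'x set \<Rightarrow> 'x set" where
  "succs T a Y = {y. \<exists>x\<in>Y. (x, a, y) \<in> T}"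

lemma Int_Diam_eq_empty_iff: "Y \<inter> Diam T a S = {} \<longleftrightarrow> succs T a Y \<inter> S = {}"
  unfolding Diam_def succs_def by blast

lemma succs_subset: "is_lts X A T \<Longrightarrow> succs T a Y \<subseteq> X"
  unfolding is_lts_def succs_def by blast

lemma steps_preserves_states:
  assumes "is_lts X A T" "steps T x \<sigma> x'" "x \<in> X"
  shows "x' \<in> X"
  using assms(2,3)
proof (induction \<sigma> arbitrary: x)
  case (Cons a \<sigma>)
  then obtain y where "(x, a, y) \<in> T" "steps T y \<sigma> x'" by auto
  with assms(1) Cons.IH show ?case by (auto simp: is_lts_def)
qed simp

definition word_sim :: "('x \<times> 'a \<times> 'x) set \<Rightarrow> 'a set \<Rightarrow> ('x \<times> 'x) set \<Rightarrow> 'x set \<Rightarrow> 'x set \<Rightarrow> bool"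
  where "word_sim T A R0 X1 X2 \<longleftrightarrow> (\<forall>x1\<in>X1. \<forall>\<sigma>\<in>lists A. \<forall>x1'. steps T x1 \<sigma> x1' \<longrightarrow>
     (\<exists>x2\<in>X2. \<exists>x2'. steps T x2 \<sigma> x2' \<and> (x1', x2') \<in> R0))"

lemma mem_Omega:
  "(X1, X2) \<in> Omega X A T R0 \<longleftrightarrow>
     X1 \<subseteq> X \<and> X2 \<subseteq> X \<and> word_sim T A R0 X1 X2 \<and> word_sim T A R0 X2 X1"
  unfolding Omega_def word_sim_def by simp

lemma word_sim_Nil: "word_sim T A R0 X1 X2 \<Longrightarrow> x1 \<in> X1 \<Longrightarrow> \<exists>x2\<in>X2. (x1, x2) \<in> R0"
  unfolding word_sim_def by (metis lists.Nil steps.simps(1))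

lemma word_sim_refl:
  assumes "is_lts X A T" "is_preorder X R0" "Y \<subseteq> X"
  shows "word_sim T A R0 Y Y"
  unfolding word_sim_def
proof (intro ballI allI impI)
  fix x \<sigma> x' assume "x \<in> Y" "steps T x \<sigma> x'"
  moreover from this have "(x', x') \<in> R0"
    using assms steps_preserves_states by (fastforce simp: is_preorder_def)
  ultimately show "\<exists>x2\<in>Y. \<exists>x2'. steps T x2 \<sigma> x2' \<and> (x', x2') \<in> R0" by blast
qed

lemma word_sim_trans:
  assumes "trans R0" "word_sim T A R0 X1 X2" "word_sim T A R0 X2 X3"
  shows "word_sim T A R0 X1 X3"
  using assms unfolding word_sim_def by (meson transD)

lemma word_sim_succs:
  assumes "word_sim T A R0 X1 X2" "a \<in> A"
  shows "word_sim T A R0 (succs T a X1) (succs T a X2)"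
  unfolding word_sim_def
proof (intro ballI allI impI)
  fix y \<sigma> y' assume "y \<in> succs T a X1" "\<sigma> \<in> lists A" "steps T y \<sigma> y'"
  then obtain x where "x \<in> X1" "steps T x (a # \<sigma>) y'"
    by (auto simp: succs_def)
  with assms \<open>\<sigma> \<in> lists A\<close> obtain x2 x2' where
    "x2 \<in> X2" "steps T x2 (a # \<sigma>) x2'" "(y', x2') \<in> R0"
    unfolding word_sim_def by (meson Cons_in_lists_iff)
  then show "\<exists>y2\<in>succs T a X2. \<exists>y2'. steps T y2 \<sigma> y2' \<and> (y', y2') \<in> R0"
    by (auto simp: succs_def)
qed

lemma equiv_Omega:
  assumes "is_lts X A T" "is_preorder X R0"
  shows "equiv (Pow X) (Omega X A T R0)"
proof (rule equivI)
  show "Omega X A T R0 \<subseteq> Pow X \<times> Pow X" by (auto simp: Omega_def)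
  show "refl_on (Pow X) (Omega X A T R0)"
    using word_sim_refl[OF assms] by (auto simp: refl_on_def mem_Omega)
  show "sym (Omega X A T R0)" by (auto simp: sym_def mem_Omega)
  have "trans R0" using assms(2) by (simp add: is_preorder_def)
  then show "trans (Omega X A T R0)"
    by (intro transI) (auto simp: mem_Omega intro: word_sim_trans)
qed

lemma Omega_succs:
  assumes "is_lts X A T" "(X1, X2) \<in> Omega X A T R0" "a \<in> A"
  shows "(succs T a X1, succs T a X2) \<in> Omega X A T R0"
  using assms unfolding mem_Omega by (simp add: word_sim_succs succs_subset[OF assms(1)])

lemma Omega_subset_RH: "Omega X A T R0 \<subseteq> RH X R0"
  by (auto simp: mem_Omega mem_RH dest: word_sim_Nil)

lemma Omega_meets_lo_t:
  assumes "is_lts X A T" "(X1, X2) \<in> Omega X A T R0"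
    and "S \<in> lo_t X A T (gamma_t X (Omega X A T R0))" "X1 \<inter> S \<noteq> {}"
  shows "X2 \<inter> S \<noteq> {}"
  using assms(3)
  unfolding lo_t_def
proof (elim UnE UN_E imageE)
  fix a S' assume "a \<in> A" "S' \<in> gamma_t X (Omega X A T R0)" "S = Diam T a S'"
  then have "succs T a X1 \<inter> S' \<noteq> {} \<longleftrightarrow> succs T a X2 \<inter> S' \<noteq> {}"
    using gamma_tD Omega_succs[OF assms(1,2)] by blast
  with assms(4) \<open>S = Diam T a S'\<close> show "X2 \<inter> S \<noteq> {}"
    by (simp add: Int_Diam_eq_empty_iff)
next
  assume "S \<in> {X}"
  obtain x1 where "x1 \<in> X1" using assms(4) by blast
  with assms(2) obtain x2 where "x2 \<in> X2" "X2 \<subseteq> X"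
    unfolding mem_Omega by (meson word_sim_Nil)
  with \<open>S \<in> {X}\<close> show "X2 \<inter> S \<noteq> {}" by blast
qed

lemma Omega_subset_beta_R0:
  assumes "is_lts X A T"
  shows "Omega X A T R0 \<subseteq> beta_R0 X A T R0 (Omega X A T R0)"
proof
  fix p assume "p \<in> Omega X A T R0"
  moreover obtain X1 X2 where p: "p = (X1, X2)" by fastforce
  ultimately have "(X1, X2) \<in> Omega X A T R0" "(X2, X1) \<in> Omega X A T R0"
    by (auto simp: mem_Omega)
  then have "X1 \<inter> S \<noteq> {} \<longleftrightarrow> X2 \<inter> S \<noteq> {}"
    if "S \<in> lo_t X A T (gamma_t X (Omega X A T R0))" for S
    using Omega_meets_lo_t[OF assms(1) _ that] by blast
  moreover have "X1 \<subseteq> X" "X2 \<subseteq> X"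
    using \<open>(X1, X2) \<in> Omega X A T R0\<close> by (simp_all add: mem_Omega)
  ultimately have "(X1, X2) \<in> beta_t X A T (Omega X A T R0)"
    unfolding beta_t_def mem_alpha_t by blast
  with \<open>(X1, X2) \<in> Omega X A T R0\<close> Omega_subset_RH show "p \<in> beta_R0 X A T R0 (Omega X A T R0)"
    unfolding beta_R0_def p by blast
qed

lemma Union_equiv_class_rel:
  assumes "equiv (Pow X) R" "Union_closed R" "Y \<subseteq> X"
  shows "(\<Union>(R `` {Y}), Y) \<in> R"
proof -
  define P where "P = (\<lambda>W. (W, Y)) ` (R `` {Y})"
  have "Y \<in> R `` {Y}" using equiv_class_self[OF assms(1)] assms(3) by simp
  then have "fst ` P = R `` {Y}" "snd ` P = {Y}"
    unfolding P_def image_image by auto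
  moreover have "P \<subseteq> R"
  proof -
    from assms(1) have "sym R" by (rule equivE)
    then show ?thesis unfolding P_def by (auto dest: symD)
  qed
  then have "(\<Union>(fst ` P), \<Union>(snd ` P)) \<in> R" by (rule Union_closedD[OF assms(2)])
  ultimately show ?thesis by simp
qed

lemma compl_Union_equiv_class_in_gamma_t:
  assumes "equiv (Pow X) R" "Union_closed R" "Y \<subseteq> X"
  shows "X - \<Union>(R `` {Y}) \<in> gamma_t X R"
proof -
  define C where "C = \<Union>(R `` {Y})"
  have R_sym: "(b, a) \<in> R" if "(a, b) \<in> R" for a b
    using assms(1) that unfolding equiv_def by (blast dest: symD)
  have R_trans: "(a, c) \<in> R" if "(a, b) \<in> R" "(b, c) \<in> R" for a b c
    using assms(1) that unfolding equiv_def by (blast dest: transD)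
  have CY: "(C, Y) \<in> R" using Union_equiv_class_rel[OF assms] by (simp add: C_def)
  have C_closed: "Z2 \<subseteq> C" if "(Z1, Z2) \<in> R" "Z1 \<subseteq> C" for Z1 Z2
  proof -
    have "(C, C) \<in> R" using CY R_sym R_trans by blast
    with assms(2) that(1) have "(Z1 \<union> C, Z2 \<union> C) \<in> R" by (rule Union_closed_Un2)
    with that(2) have "(C, Z2 \<union> C) \<in> R" by (simp add: Un_absorb1)
    with CY have "(Y, Z2 \<union> C) \<in> R" using R_sym R_trans by blast
    then have "Z2 \<union> C \<in> R `` {Y}" by simp
    then have "Z2 \<union> C \<subseteq> \<Union>(R `` {Y})" by (rule Union_upper)
    then show ?thesis unfolding C_def by simp
  qed
  have "Z1 \<inter> (X - C) \<noteq> {} \<longleftrightarrow> Z2 \<inter> (X - C) \<noteq> {}" if "(Z1, Z2) \<in> R" for Z1 Z2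
  proof -
    have "Z \<inter> (X - C) = {} \<longleftrightarrow> Z \<subseteq> C" if "Z \<subseteq> X" for Z
      using that by blast
    moreover have "Z1 \<subseteq> X" "Z2 \<subseteq> X" using that equiv_type[OF assms(1)] by auto
    moreover have "Z1 \<subseteq> C \<longleftrightarrow> Z2 \<subseteq> C" using C_closed that R_sym by blast
    ultimately show ?thesis by simp
  qed
  then show ?thesis unfolding gamma_t_def C_def[symmetric] by auto
qed

lemma succ_in_Union_equiv_class:
  assumes lts: "is_lts X A T" and eq: "equiv (Pow X) R" and U: "Union_closed R"
    and post: "R \<subseteq> beta_R0 X A T R0 R"
    and "(X1, X2) \<in> R" "x1 \<in> X1" "(x1, a, y) \<in> T" "a \<in> A"
  shows "y \<in> \<Union>(R `` {succs T a X2})"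
proof (rule ccontr)
  let ?Y = "succs T a X2"
  let ?C = "\<Union>(R `` {?Y})"
  assume "y \<notin> ?C"
  have "X - ?C \<in> gamma_t X R"
    using compl_Union_equiv_class_in_gamma_t[OF eq U succs_subset[OF lts]] .
  with \<open>a \<in> A\<close> have "Diam T a (X - ?C) \<in> lo_t X A T (gamma_t X R)"
    unfolding lo_t_def by blast
  moreover have "(X1, X2) \<in> alpha_t X (lo_t X A T (gamma_t X R))"
    using post \<open>(X1, X2) \<in> R\<close> unfolding beta_R0_def beta_t_def by blast
  moreover have "y \<in> X" using lts \<open>(x1, a, y) \<in> T\<close> by (auto simp: is_lts_def)
  with \<open>y \<notin> ?C\<close> \<open>x1 \<in> X1\<close> \<open>(x1, a, y) \<in> T\<close> have "X1 \<inter> Diam T a (X - ?C) \<noteq> {}"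
    unfolding Diam_def by blast
  ultimately have "?Y \<inter> (X - ?C) \<noteq> {}"
    unfolding mem_alpha_t Int_Diam_eq_empty_iff[symmetric] by blast
  moreover have "?Y \<in> R `` {?Y}"
    using equiv_class_self[OF eq] succs_subset[OF lts] by simp
  ultimately show False by blast
qed

lemma post_fixpoint_word_sim:
  assumes lts: "is_lts X A T" and eq: "equiv (Pow X) R" and U: "Union_closed R"
    and post: "R \<subseteq> beta_R0 X A T R0 R"
    and "(X1, X2) \<in> R"
  shows "word_sim T A R0 X1 X2"
proof -
  have "\<exists>x2\<in>X2. \<exists>x2'. steps T x2 \<sigma> x2' \<and> (x1', x2') \<in> R0"
    if "\<sigma> \<in> lists A" "(X1, X2) \<in> R" "x1 \<in> X1" "steps T x1 \<sigma> x1'" for \<sigma> X1 X2 x1 x1'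
    using that
  proof (induction \<sigma> arbitrary: X1 X2 x1 x1')
    case Nil
    then have "(X1, X2) \<in> RH X R0" using post by (auto simp: beta_R0_def)
    with Nil show ?case by (auto simp: mem_RH)
  next
    case (Cons a \<sigma>)
    let ?Y = "succs T a X2"
    from Cons.prems obtain y where "(x1, a, y) \<in> T" "steps T y \<sigma> x1'" by auto
    have "(\<Union>(R `` {?Y}), ?Y) \<in> R"
      using Union_equiv_class_rel[OF eq U succs_subset[OF lts]] .
    moreover have "y \<in> \<Union>(R `` {?Y})"
      using succ_in_Union_equiv_class[OF lts eq U post Cons.prems(1,2) \<open>(x1, a, y) \<in> T\<close> Cons.hyps(1)] .
    ultimately obtain u x2' where "u \<in> ?Y" "steps T u \<sigma> x2'" "(x1', x2') \<in> R0"
      using Cons.IH \<open>steps T y \<sigma> x1'\<close> by blast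
    then show ?case by (auto simp: succs_def)
  qed
  with \<open>(X1, X2) \<in> R\<close> show ?thesis unfolding word_sim_def by blast
qed

lemma post_fixpoint_subset_Omega:
  assumes "is_lts X A T" "equiv (Pow X) R" "Union_closed R" "R \<subseteq> beta_R0 X A T R0 R"
  shows "R \<subseteq> Omega X A T R0"
proof
  fix p assume "p \<in> R"
  moreover obtain X1 X2 where p: "p = (X1, X2)" by fastforce
  ultimately have "(X1, X2) \<in> R" "(X2, X1) \<in> R"
    using assms(2) by (auto elim: equivE dest: symD)
  moreover have "X1 \<subseteq> X" "X2 \<subseteq> X"
    using \<open>(X1, X2) \<in> R\<close> equiv_type[OF assms(2)] by auto
  ultimately show "p \<in> Omega X A T R0"
    unfolding p mem_Omega using post_fixpoint_word_sim[OF assms] by blast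
qed

theorem mainTheorem1:
  fixes X :: "'x set" and A :: "'a set" and T :: "('x \<times> 'a \<times> 'x) set"
    and R0 :: "('x \<times> 'x) set"
  assumes "is_lts X A T"
    and "is_preorder X R0"
  shows "is_lfp_sup X (beta_R0 X A T R0) (Omega X A T R0)"
proof -
  let ?\<beta> = "beta_R0 X A T R0" and ?\<Omega> = "Omega X A T R0"
  have post: "?\<Omega> \<subseteq> ?\<beta> ?\<Omega>"
    using Omega_subset_beta_R0[OF assms(1)] .
  have "?\<beta> ?\<Omega> \<subseteq> ?\<Omega>"
    using post_fixpoint_subset_Omega[OF assms(1) equiv_beta_R0[OF assms(2)]
        Union_closed_beta_R0 beta_R0_mono[OF post]] .
  with post have "?\<beta> ?\<Omega> = ?\<Omega>" by blast
  moreover have "R \<subseteq> ?\<Omega>" if "equiv (Pow X) R" "?\<beta> R = R" for R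
  proof -
    from that(2) have "Union_closed R" "R \<subseteq> ?\<beta> R"
      using Union_closed_beta_R0[of X A T R0 R] by simp_all
    then show ?thesis using post_fixpoint_subset_Omega[OF assms(1) that(1)] by blast
  qed
  ultimately show ?thesis
    unfolding is_lfp_sup_def Eq_Pow_def using equiv_Omega[OF assms] by blast
qed

end
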